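(* Let $(\mathcal{B},\|\cdot\|)$ be a Banach algebra with unity $e$ and let $U\subset\mathbb{R}^d$ be open. Assume $A,X:U\to\mathcal{B}$ are $C^s$-maps, $s\in\mathbb{N}_0$, and $A^{-1}(\lambda)$ exists for all $\lambda\in U$. Suppose there exist constants $\epsilon>0$, $M\ge1$, $C\ge1$ with $\|\partial^\beta A^{-1}(\lambda)\|\le MC^{|\beta|_1}$ and $\|\partial^\beta X(\lambda)\|\le\epsilon C^{|\beta|_1}$ for all $\lambda\in U$, $0\le|\beta|_1\le s$, and $\epsilon M\le\frac12$. Then $(A+X)(\lambda)$ is invertible in $\mathcal{B}$ for all $\lambda\in U$ and $$\|\partial^\beta(A+X)^{-1}(\lambda)\|\le2\Big(\sum_{k=1}^{|\beta|_1+1}k^{|\beta|_1}\|e\|^k\Big)M(2C)^{|\beta|_1}\quad\text{for }\lambda\in U,\ 0\le|\beta|_1\le s.$$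
   Context: $\beta\in\mathbb{N}_0^d$ is a multi-index, $|\beta|_1=\sum_i\beta_i$, $\partial^\beta$ the corresponding partial derivative. *)

theory Defs
  imports "HOL-Analysis.Analysis"
begin

definition invertible_elem :: "'a::ring_1 \<Rightarrow> bool" where
  "invertible_elem a \<longleftrightarrow> (\<exists>b. a * b = 1 \<and> b * a = 1)"

definition ainv :: "'a::ring_1 \<Rightarrow> 'a" where
  "ainv a = (THE b. a * b = 1 \<and> b * a = 1)"

definition partial_i :: "'n::finite \<Rightarrow> (real^'n \<Rightarrow> 'b::real_normed_vector) \<Rightarrow> real^'n \<Rightarrow> 'b" where
  "partial_i i f x = vector_derivative (\<lambda>t. f (x + t *\<^sub>R axis i 1)) (at 0)"

fun dlist :: "'n::finite list \<Rightarrow> (real^'n \<Rightarrow> 'b::real_normed_vector) \<Rightarrow> real^'n \<Rightarrow> 'b" where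
  "dlist [] f = f"
| "dlist (i # is) f = partial_i i (dlist is f)"

definition coord_list :: "'n::finite list" where
  "coord_list = (SOME xs. distinct xs \<and> set xs = UNIV)"

definition mpartial :: "('n::finite \<Rightarrow> nat) \<Rightarrow> (real^'n \<Rightarrow> 'b::real_normed_vector) \<Rightarrow> real^'n \<Rightarrow> 'b" where
  "mpartial \<beta> f = dlist (concat (map (\<lambda>i. replicate (\<beta> i) i) coord_list)) f"

definition mi_order :: "('n::finite \<Rightarrow> nat) \<Rightarrow> nat" where
  "mi_order \<beta> = (\<Sum>i\<in>UNIV. \<beta> i)"

definition Cs_on :: "nat \<Rightarrow> (real^'n::finite) set \<Rightarrow> (real^'n \<Rightarrow> 'b::real_normed_vector) \<Rightarrow> bool" where
  "Cs_on s U f \<longleftrightarrow>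
     (\<forall>is. length is \<le> s \<longrightarrow> continuous_on U (dlist is f)) \<and>
     (\<forall>is i. length is < s \<longrightarrow>
        (\<forall>x\<in>U. (\<lambda>t. dlist is f (x + t *\<^sub>R axis i 1)) differentiable (at 0)))"

end

(* Let G = A^-1 and H = G X. Since norm H <= eps M <= 1/2, A + X = A (1 + H) is invertible by
   the Neumann series, and F = (A + X)^-1 satisfies F + H F = G. Differentiating this identity
   with the Leibniz rule expresses a derivative of F of order n through the same derivative of G,
   the term H times the same derivative of F, which is absorbed because norm H <= 1/2, and
   products of derivatives of H of positive order with derivatives of F of lower order.
   Derivatives of H are bounded by eps M (2C)^k, again by the Leibniz rule, so strong induction
   on n gives the bound 2 (n+1)^n M (2C)^n; and (n+1)^n is dominated by the last summand of the
   stated sum because norm e >= 1 in a nontrivial algebra. *)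

theory Submission
  imports Defs "HOL-Library.Sublist"
begin

section \<open>Units of a Banach algebra\<close>

lemma ainv_unique:
  fixes a b :: "'a::ring_1"
  assumes "a * b = 1" "b * a = 1"
  shows "ainv a = b"
  unfolding ainv_def
proof (rule the_equality)
  fix c assume c: "a * c = 1 \<and> c * a = 1"
  have "c = (c * a) * b" using assms(1) by (simp add: mult.assoc)
  then show "c = b" using c by simp
qed (use assms in simp)

lemma invertible_elem_ainv:
  fixes a :: "'a::ring_1"
  assumes "invertible_elem a"
  shows "a * ainv a = 1" "ainv a * a = 1"
  using assms ainv_unique unfolding invertible_elem_def by auto

lemma invertible_elem_mult:
  fixes a b :: "'a::ring_1"
  assumes "invertible_elem a" "invertible_elem b"
  shows "invertible_elem (a * b)"
proof -
  note a = invertible_elem_ainv[OF assms(1)] and b = invertible_elem_ainv[OF assms(2)]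
  have "a * b * (ainv b * ainv a) = a * (b * ainv b) * ainv a" by (simp only: mult.assoc)
  moreover have "ainv b * ainv a * (a * b) = ainv b * (ainv a * a) * b" by (simp only: mult.assoc)
  ultimately show ?thesis using a b unfolding invertible_elem_def by auto
qed

lemma ainv_diff:
  fixes x y :: "'a::ring_1"
  assumes "invertible_elem x" "invertible_elem y"
  shows "ainv y - ainv x = - (ainv y * (y - x) * ainv x)"
proof -
  have "ainv y * (y - x) * ainv x = (ainv y * y) * ainv x - ainv y * (x * ainv x)"
    by (simp add: algebra_simps)
  then show ?thesis
    using invertible_elem_ainv[OF assms(1)] invertible_elem_ainv[OF assms(2)] by simp
qed

lemma ainv_add_eq:
  fixes x h :: "'a::ring_1"
  assumes "invertible_elem x" "invertible_elem (x + h)"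
  shows "ainv (x + h) + ainv x * h * ainv (x + h) = ainv x"
proof -
  have "ainv x = ainv x * ((x + h) * ainv (x + h))"
    using invertible_elem_ainv(1)[OF assms(2)] by simp
  also have "\<dots> = (ainv x * x) * ainv (x + h) + ainv x * h * ainv (x + h)"
    by (simp add: algebra_simps)
  finally show ?thesis using invertible_elem_ainv(2)[OF assms(1)] by simp
qed

text \<open>Without the normalisation \<open>norm 1 = 1\<close>, which is not assumed, only powers of positive
  exponent satisfy \<open>norm (w ^ n) \<le> norm w ^ n\<close>.\<close>

lemma norm_power_Suc_le:
  fixes w :: "'a::{real_normed_algebra, real_algebra_1}"
  shows "norm (w ^ Suc n) \<le> norm w ^ Suc n"
proof (induction n)
  case (Suc n)
  have "norm (w * w ^ Suc n) \<le> norm w * norm (w ^ Suc n)" by (rule norm_mult_ineq)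
  also have "\<dots> \<le> norm w * norm w ^ Suc n" using Suc by (simp add: mult_left_mono)
  finally show ?case by simp
qed simp

lemma invertible_elem_one_plus:
  fixes u :: "'a::{real_normed_algebra, real_algebra_1, banach}"
  assumes "norm u < 1"
  shows "invertible_elem (1 + u)"
proof -
  define w where "w = - u"
  have "summable (\<lambda>n. norm w ^ Suc n)" using assms by (simp add: w_def summable_geometric)
  then have "summable (\<lambda>n. w ^ Suc n)"
    by (rule summable_comparison_test'[where N=0]) (metis norm_power_Suc_le power_Suc)
  then have sw: "summable (\<lambda>n. w ^ n)" by (simp only: summable_Suc_iff)
  define S where "S = (\<Sum>n. w ^ n)"
  have tail: "(\<Sum>n. w ^ Suc n) = S - 1"
    unfolding S_def using suminf_split_head[OF sw] by simp
  have "w * S = S - 1"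
    using suminf_mult[OF sw, of w] tail unfolding S_def by simp
  moreover have "S * w = S - 1"
    using suminf_mult2[OF sw, of w] tail unfolding S_def by (simp add: power_commutes)
  ultimately have "(1 + u) * S = 1" "S * (1 + u) = 1" by (simp_all add: w_def algebra_simps)
  then show ?thesis unfolding invertible_elem_def by blast
qed

lemma invertible_elem_add:
  fixes x h :: "'a::{real_normed_algebra, real_algebra_1, banach}"
  assumes "invertible_elem x" "norm (ainv x) * norm h < 1"
  shows "invertible_elem (x + h)"
proof -
  have "x + h = x * (1 + ainv x * h)"
    using invertible_elem_ainv[OF assms(1)] by (simp add: algebra_simps flip: mult.assoc)
  moreover have "invertible_elem (1 + ainv x * h)"
    using norm_mult_ineq[of "ainv x" h] assms(2) by (intro invertible_elem_one_plus) simp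
  ultimately show ?thesis using invertible_elem_mult assms(1) by metis
qed

lemma norm_mult3_le:
  fixes x y z :: "'a::real_normed_algebra"
  shows "norm (x * y * z) \<le> norm x * norm y * norm z"
  by (metis mult_right_mono norm_ge_zero norm_mult_ineq order_trans)

lemma norm_ainv_le:
  fixes x y :: "'a::{real_normed_algebra, real_algebra_1}"
  assumes "invertible_elem x" "invertible_elem y" "norm (ainv x) * norm (y - x) \<le> 1/2"
  shows "norm (ainv y) \<le> 2 * norm (ainv x)"
proof -
  have "ainv y = ainv x + (ainv y - ainv x)" by simp
  also have "\<dots> = ainv x - ainv y * (y - x) * ainv x"
    unfolding ainv_diff[OF assms(1,2)] by simp
  finally have "norm (ainv y) = norm (ainv x - ainv y * (y - x) * ainv x)"
    by (rule arg_cong)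
  also have "\<dots> \<le> norm (ainv x) + norm (ainv y) * norm (y - x) * norm (ainv x)"
    using norm_triangle_ineq4 norm_mult3_le order_trans add_left_mono by metis
  also have "\<dots> \<le> norm (ainv x) + norm (ainv y) * (1/2)"
    using mult_left_mono[OF assms(3), of "norm (ainv y)"]
    by (simp add: mult.assoc mult.commute[of "norm (y - x)"])
  finally show ?thesis by simp
qed

lemma eventually_invertible_elem_near:
  fixes x :: "'a::{real_normed_algebra, real_algebra_1, banach}"
  assumes "invertible_elem x"
  shows "\<forall>\<^sub>F y in at x within S. invertible_elem y \<and> norm (ainv x) * norm (y - x) \<le> 1/2"
proof -
  have "((\<lambda>y. norm (ainv x) * norm (y - x)) \<longlongrightarrow> norm (ainv x) * 0) (at x within S)"
    by (intro tendsto_mult tendsto_const tendsto_norm_zero LIM_zero tendsto_ident_at)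
  then have "\<forall>\<^sub>F y in at x within S. norm (ainv x) * norm (y - x) < 1/2"
    by (intro order_tendstoD) auto
  then show ?thesis
  proof eventually_elim
    case (elim y)
    then have "invertible_elem (x + (y - x))" by (intro invertible_elem_add assms) auto
    with elim show ?case by simp
  qed
qed

lemma tendsto_ainv:
  fixes x :: "'a::{real_normed_algebra, real_algebra_1, banach}"
  assumes "invertible_elem x"
  shows "(ainv \<longlongrightarrow> ainv x) (at x within S)"
proof -
  have "((\<lambda>y. ainv y - ainv x) \<longlongrightarrow> 0) (at x within S)"
  proof (rule Lim_null_comparison)
    show "\<forall>\<^sub>F y in at x within S.
        norm (ainv y - ainv x) \<le> 2 * norm (ainv x) * norm (y - x) * norm (ainv x)"
      using eventually_invertible_elem_near[OF assms]
    proof eventually_elim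
      case (elim y)
      have "norm (ainv y - ainv x) \<le> norm (ainv y) * norm (y - x) * norm (ainv x)"
        unfolding ainv_diff[OF assms elim[THEN conjunct1]] norm_minus_cancel by (rule norm_mult3_le)
      also have "\<dots> \<le> 2 * norm (ainv x) * norm (y - x) * norm (ainv x)"
        using norm_ainv_le[OF assms] elim by (intro mult_right_mono) auto
      finally show ?case .
    qed
    show "((\<lambda>y. 2 * norm (ainv x) * norm (y - x) * norm (ainv x)) \<longlongrightarrow> 0) (at x within S)"
      by (intro tendsto_mult_right_zero tendsto_mult_left_zero tendsto_norm_zero LIM_zero
          tendsto_ident_at)
  qed
  then show ?thesis by (simp only: Lim_null[symmetric])
qed

lemma has_derivative_ainv:
  fixes x :: "'a::{real_normed_algebra, real_algebra_1, banach}"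
  assumes "invertible_elem x"
  shows "(ainv has_derivative (\<lambda>h. - (ainv x * h * ainv x))) (at x within S)"
proof (rule has_derivativeI_sandwich)
  show "bounded_linear (\<lambda>h. - (ainv x * h * ainv x))"
    by (simp add: bounded_linear_minus bounded_linear_mult_const bounded_linear_mult_right)
  have "0 < 2 * norm (ainv x) + 1" using norm_ge_zero[of "ainv x"] by linarith
  then show "0 < 1 / (2 * norm (ainv x) + 1)" by simp
  show "((\<lambda>y. norm (ainv y - ainv x) * norm (ainv x)) \<longlongrightarrow> 0) (at x within S)"
    using tendsto_ainv[OF assms]
    by (simp add: LIM_zero_iff tendsto_mult_left_zero tendsto_norm_zero)
next
  fix y assume y: "y \<noteq> x" "dist y x < 1 / (2 * norm (ainv x) + 1)"
  have "norm (ainv x) * norm (y - x) < 1"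
  proof -
    have "norm (ainv x) * norm (y - x) \<le> norm (ainv x) * (1 / (2 * norm (ainv x) + 1))"
      using y(2) by (intro mult_left_mono) (simp_all add: dist_norm)
    also have "\<dots> < 1"
    proof -
      have "norm (ainv x) < 2 * norm (ainv x) + 1" "0 < 2 * norm (ainv x) + 1"
        using norm_ge_zero[of "ainv x"] by linarith+
      then show ?thesis by simp
    qed
    finally show ?thesis .
  qed
  then have inv: "invertible_elem y" using invertible_elem_add[OF assms] by fastforce
  have "ainv y - ainv x - - (ainv x * (y - x) * ainv x)
      = - (ainv y * (y - x) * ainv x) + ainv x * (y - x) * ainv x"
    using ainv_diff[OF assms inv] by simp
  also have "\<dots> = - ((ainv y - ainv x) * (y - x) * ainv x)" by (simp add: algebra_simps)
  finally have "norm (ainv y - ainv x - - (ainv x * (y - x) * ainv x))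
      \<le> norm (ainv y - ainv x) * norm (y - x) * norm (ainv x)"
    using norm_mult3_le by (metis norm_minus_cancel)
  then show "norm (ainv y - ainv x - - (ainv x * (y - x) * ainv x)) / norm (y - x)
      \<le> norm (ainv y - ainv x) * norm (ainv x)"
    using y(1) by (simp add: divide_le_eq mult.assoc mult.commute[of "norm (y - x)"])
qed

section \<open>Partial derivatives along coordinate lines\<close>

lemma eventually_nhds_line_in_open:
  fixes x :: "real^'n::finite"
  assumes "open U" "x \<in> U"
  shows "\<forall>\<^sub>F t in nhds 0. x + t *\<^sub>R axis i 1 \<in> U"
proof -
  have "((\<lambda>t. x + t *\<^sub>R axis i 1) \<longlongrightarrow> x + 0 *\<^sub>R axis i 1) (nhds 0)"
    by (rule tendsto_at_iff_tendsto_nhds[THEN iffD1]) (intro tendsto_intros)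
  then show ?thesis using assms by (simp add: topological_tendstoD)
qed

lemma has_vector_derivative_line_cong:
  fixes y :: "real^'n::finite"
  assumes "open U" "y \<in> U" "\<forall>z\<in>U. f z = g z"
    and "((\<lambda>t. g (y + t *\<^sub>R axis i 1)) has_vector_derivative D) (at 0)"
  shows "((\<lambda>t. f (y + t *\<^sub>R axis i 1)) has_vector_derivative D) (at 0)"
proof (rule has_vector_derivative_cong_ev[THEN iffD2, OF _ _ assms(4)])
  show "\<forall>\<^sub>F t in nhds 0. t \<in> UNIV \<longrightarrow> f (y + t *\<^sub>R axis i 1) = g (y + t *\<^sub>R axis i 1)"
    using eventually_nhds_line_in_open[OF assms(1,2), of i] assms(3) by (auto elim: eventually_mono)
qed (use assms(2,3) in simp)

lemma partial_i_eqI: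
  "((\<lambda>t. f (y + t *\<^sub>R axis i 1)) has_vector_derivative D) (at 0) \<Longrightarrow> partial_i i f y = D"
  unfolding partial_i_def by (rule vector_derivative_at)

lemma partial_i_cong:
  assumes "open U" "\<forall>z\<in>U. f z = g z" "x \<in> U"
  shows "partial_i i f x = partial_i i g x"
  unfolding partial_i_def
  using eventually_nhds_line_in_open[OF assms(1,3), of i] assms(2)
  by (intro vector_derivative_cong_eq) (auto elim: eventually_mono)

lemma dlist_cong:
  assumes "open U" "\<forall>z\<in>U. f z = g z"
  shows "\<forall>z\<in>U. dlist xs f z = dlist xs g z"
  using assms by (induction xs) (auto intro: partial_i_cong)

lemma dlist_append: "dlist (xs @ ys) f = dlist xs (dlist ys f)"
  by (induction xs) auto

text \<open>The differentiability half of \<open>Cs_on\<close>.\<close>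

definition partially_differentiable ::
    "nat \<Rightarrow> (real^'n::finite) set \<Rightarrow> (real^'n \<Rightarrow> 'b::real_normed_vector) \<Rightarrow> bool" where
  "partially_differentiable k U f \<longleftrightarrow> (\<forall>xs i. length xs < k \<longrightarrow>
      (\<forall>x\<in>U. (\<lambda>t. dlist xs f (x + t *\<^sub>R axis i 1)) differentiable (at 0)))"

lemma Cs_on_imp_partially_differentiable: "Cs_on s U f \<Longrightarrow> partially_differentiable s U f"
  unfolding Cs_on_def partially_differentiable_def by blast

lemma partially_differentiable_mono:
  "partially_differentiable k U f \<Longrightarrow> j \<le> k \<Longrightarrow> partially_differentiable j U f"
  unfolding partially_differentiable_def by auto

lemma has_vector_derivative_dlist:
  assumes "partially_differentiable k U f" "length xs < k" "x \<in> U"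
  shows "((\<lambda>t. dlist xs f (x + t *\<^sub>R axis i 1)) has_vector_derivative dlist (i # xs) f x) (at 0)"
  using assms unfolding partially_differentiable_def vector_derivative_works
  by (simp add: partial_i_def)

lemma partially_differentiable_cong:
  assumes "open U" "\<forall>z\<in>U. f z = g z" "partially_differentiable k U f"
  shows "partially_differentiable k U g"
  unfolding partially_differentiable_def
proof (intro allI impI ballI)
  fix xs :: "'a list" and i x assume l: "length xs < k" and x: "x \<in> U"
  have "\<forall>z\<in>U. dlist xs g z = dlist xs f z" using dlist_cong[OF assms(1), of g f] assms(2) by simp
  from has_vector_derivative_line_cong[OF assms(1) x this
      has_vector_derivative_dlist[OF assms(3) l x]]
  show "(\<lambda>t. dlist xs g (x + t *\<^sub>R axis i 1)) differentiable at 0"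
    by (rule differentiableI_vector)
qed

lemma partially_differentiable_Suc:
  "partially_differentiable (Suc k) U f \<longleftrightarrow>
     (\<forall>i. \<forall>x\<in>U. (\<lambda>t. f (x + t *\<^sub>R axis i 1)) differentiable (at 0)) \<and>
     (\<forall>j. partially_differentiable k U (partial_i j f))"
proof -
  have "(\<forall>xs. length xs < Suc k \<longrightarrow> P xs) \<longleftrightarrow> P [] \<and> (\<forall>xs j. length xs < k \<longrightarrow> P (xs @ [j]))"
    for P :: "'a list \<Rightarrow> bool"
  proof
    assume "P [] \<and> (\<forall>xs j. length xs < k \<longrightarrow> P (xs @ [j]))"
    then show "\<forall>xs. length xs < Suc k \<longrightarrow> P xs"
      by (metis length_append_singleton not_less_eq rev_exhaust)
  qed simp
  then show ?thesis unfolding partially_differentiable_def by (auto simp: dlist_append)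
qed

context
  fixes U :: "(real^'n::finite) set" and k :: nat
    and h :: "real^'n \<Rightarrow> 'b::real_normed_vector" and \<Phi> :: "'n list \<Rightarrow> real^'n \<Rightarrow> 'b"
  assumes U: "open U"
    and formula_Nil: "\<forall>y\<in>U. h y = \<Phi> [] y"
    and formula_Cons: "\<And>xs i y. length xs < k \<Longrightarrow> y \<in> U \<Longrightarrow>
      ((\<lambda>t. \<Phi> xs (y + t *\<^sub>R axis i 1)) has_vector_derivative \<Phi> (i # xs) y) (at 0)"
begin

lemma dlist_eq_formula: "length xs \<le> k \<Longrightarrow> y \<in> U \<Longrightarrow> dlist xs h y = \<Phi> xs y"
proof (induction xs arbitrary: y)
  case (Cons i xs)
  then have "\<forall>z\<in>U. dlist xs h z = \<Phi> xs z" by simp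
  from has_vector_derivative_line_cong[OF U \<open>y \<in> U\<close> this formula_Cons]
  show ?case using Cons.prems by (simp add: partial_i_eqI)
qed (use formula_Nil in simp)

lemma partially_differentiable_formula: "partially_differentiable k U h"
  unfolding partially_differentiable_def
proof (intro allI impI ballI)
  fix xs :: "'n list" and i y assume xs: "length xs < k" and y: "y \<in> U"
  have "\<forall>z\<in>U. dlist xs h z = \<Phi> xs z" using dlist_eq_formula xs by simp
  from has_vector_derivative_line_cong[OF U y this formula_Cons[OF xs y]]
  show "(\<lambda>t. dlist xs h (y + t *\<^sub>R axis i 1)) differentiable at 0"
    by (rule differentiableI_vector)
qed

end

context
  fixes U :: "(real^'n::finite) set" and k :: nat and f g :: "real^'n \<Rightarrow> 'b::real_normed_vector"
  assumes U: "open U"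
    and f: "partially_differentiable k U f" and g: "partially_differentiable k U g"
begin

lemma has_vector_derivative_dlist_add:
  "length xs < k \<Longrightarrow> y \<in> U \<Longrightarrow> ((\<lambda>t. dlist xs f (y + t *\<^sub>R axis i 1) + dlist xs g (y + t *\<^sub>R axis i 1))
     has_vector_derivative dlist (i # xs) f y + dlist (i # xs) g y) (at 0)"
  by (intro has_vector_derivative_add has_vector_derivative_dlist[OF f]
      has_vector_derivative_dlist[OF g])

lemma dlist_add:
  "length xs \<le> k \<Longrightarrow> y \<in> U \<Longrightarrow> dlist xs (\<lambda>x. f x + g x) y = dlist xs f y + dlist xs g y"
  using dlist_eq_formula[OF U _ has_vector_derivative_dlist_add] by simp

lemma partially_differentiable_add: "partially_differentiable k U (\<lambda>x. f x + g x)"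
  using partially_differentiable_formula[OF U _ has_vector_derivative_dlist_add] by simp

end

lemma partially_differentiable_minus:
  assumes "open U" "partially_differentiable k U f"
  shows "partially_differentiable k U (\<lambda>x. - f x)"
  using partially_differentiable_formula[OF assms(1), where \<Phi> = "\<lambda>xs y. - dlist xs f y"]
    has_vector_derivative_minus[OF has_vector_derivative_dlist[OF assms(2)]] by simp

section \<open>The Leibniz rule\<close>

fun splits :: "'a list \<Rightarrow> ('a list \<times> 'a list) list" where
  "splits [] = [([], [])]"
| "splits (i # xs) = map (\<lambda>(a, b). (a, i # b)) (splits xs) @ map (\<lambda>(a, b). (i # a, b)) (splits xs)"

lemma length_splits: "(a, b) \<in> set (splits xs) \<Longrightarrow> length a + length b = length xs"
  by (induction xs arbitrary: a b) auto

lemma subseq_splits: "(a, b) \<in> set (splits xs) \<Longrightarrow> subseq a xs \<and> subseq b xs"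
  by (induction xs arbitrary: a b) auto

lemma splits_not_Nil: "splits xs \<noteq> []"
  by (induction xs) auto

lemma splits_eq_Cons: "splits xs = ([], xs) # tl (splits xs)"
proof -
  have "hd (splits xs) = ([], xs)"
    by (induction xs) (simp_all add: splits_not_Nil hd_append hd_map)
  then show ?thesis by (metis list.collapse splits_not_Nil)
qed

lemma tl_splits_Cons:
  "tl (splits (i # xs)) =
    map (\<lambda>(a, b). (a, i # b)) (tl (splits xs)) @ map (\<lambda>(a, b). (i # a, b)) (splits xs)"
  by (simp add: splits_not_Nil map_tl[symmetric])

lemma tl_splits_nonempty: "(a, b) \<in> set (tl (splits xs)) \<Longrightarrow> a \<noteq> []"
  by (induction xs arbitrary: a b) (auto simp: tl_splits_Cons simp del: splits.simps(2))

lemma sum_list_splits_power: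
  fixes c d :: "'b::comm_semiring_1"
  shows "(\<Sum>(a, b)\<leftarrow>splits xs. c ^ length a * d ^ length b) = (c + d) ^ length xs"
  by (induction xs) (simp_all add: comp_def case_prod_beta sum_list_const_mult algebra_simps)

lemma sum_list_tl_splits_power:
  fixes c :: "'b::comm_ring_1"
  shows "(\<Sum>(a, b)\<leftarrow>tl (splits xs). c ^ length b) = (c + 1) ^ length xs - c ^ length xs"
proof -
  have "c ^ length xs + (\<Sum>(a, b)\<leftarrow>tl (splits xs). c ^ length b) = (1 + c) ^ length xs"
    using sum_list_splits_power[of 1 c xs] by (subst (asm) splits_eq_Cons) (simp add: split_def)
  then show ?thesis by (metis add.commute add_diff_cancel_left')
qed

lemma has_vector_derivative_sum_list:
  "(\<And>p. p \<in> set ps \<Longrightarrow> ((\<lambda>t. h p t) has_vector_derivative D p) F) \<Longrightarrow>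
    ((\<lambda>t. \<Sum>p\<leftarrow>ps. h p t) has_vector_derivative (\<Sum>p\<leftarrow>ps. D p)) F"
  by (induction ps) (simp_all add: has_vector_derivative_const has_vector_derivative_add)

context
  fixes U :: "(real^'n::finite) set" and k :: nat and f g :: "real^'n \<Rightarrow> 'b::real_normed_algebra"
  assumes U: "open U"
    and f: "partially_differentiable k U f" and g: "partially_differentiable k U g"
begin

lemma has_vector_derivative_leibniz_sum:
  assumes "length xs < k" "y \<in> U"
  shows "((\<lambda>t. \<Sum>(a, b)\<leftarrow>splits xs. dlist a f (y + t *\<^sub>R axis i 1) * dlist b g (y + t *\<^sub>R axis i 1))
      has_vector_derivative (\<Sum>(a, b)\<leftarrow>splits (i # xs). dlist a f y * dlist b g y)) (at 0)"
proof -
  have "((\<lambda>t. \<Sum>(a, b)\<leftarrow>splits xs. dlist a f (y + t *\<^sub>R axis i 1) * dlist b g (y + t *\<^sub>R axis i 1))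
      has_vector_derivative
        (\<Sum>(a, b)\<leftarrow>splits xs.
          dlist a f y * dlist (i # b) g y + dlist (i # a) f y * dlist b g y)) (at 0)"
  proof (rule has_vector_derivative_sum_list)
    fix p assume p: "p \<in> set (splits xs)"
    obtain a b where ab: "p = (a, b)" by fastforce
    have "length a < k" "length b < k" using length_splits[of a b xs] p ab assms(1) by auto
    from has_vector_derivative_mult[OF has_vector_derivative_dlist[OF f this(1) assms(2)]
        has_vector_derivative_dlist[OF g this(2) assms(2)]]
    show "((\<lambda>t. case p of (a, b) \<Rightarrow> dlist a f (y + t *\<^sub>R axis i 1) * dlist b g (y + t *\<^sub>R axis i 1))
        has_vector_derivative
          (case p of (a, b) \<Rightarrow>
            dlist a f y * dlist (i # b) g y + dlist (i # a) f y * dlist b g y)) (at 0)"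
      by (simp add: ab)
  qed
  then show ?thesis by (simp add: sum_list_addf comp_def split_def add.commute)
qed

lemma dlist_mult:
  "length xs \<le> k \<Longrightarrow> y \<in> U \<Longrightarrow>
    dlist xs (\<lambda>x. f x * g x) y = (\<Sum>(a, b)\<leftarrow>splits xs. dlist a f y * dlist b g y)"
  using dlist_eq_formula[OF U _ has_vector_derivative_leibniz_sum] by simp

lemma partially_differentiable_mult: "partially_differentiable k U (\<lambda>x. f x * g x)"
  using partially_differentiable_formula[OF U _ has_vector_derivative_leibniz_sum] by simp

end

lemma partially_differentiable_ainv:
  fixes B :: "real^'n::finite \<Rightarrow> 'a::{real_normed_algebra, real_algebra_1, banach}"
  assumes "open U" "\<forall>x\<in>U. invertible_elem (B x)"
  shows "partially_differentiable k U B \<Longrightarrow> partially_differentiable k U (\<lambda>x. ainv (B x))"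
proof (induction k)
  case 0 then show ?case by (simp add: partially_differentiable_def)
next
  case (Suc k)
  have dB: "\<forall>i. \<forall>x\<in>U. (\<lambda>t. B (x + t *\<^sub>R axis i 1)) differentiable (at 0)"
    and dBj: "\<And>j. partially_differentiable k U (partial_i j B)"
    using Suc.prems by (simp_all add: partially_differentiable_Suc)
  have IH: "partially_differentiable k U (\<lambda>x. ainv (B x))"
    using Suc partially_differentiable_mono[OF Suc.prems] by simp
  have line: "((\<lambda>t. ainv (B (x + t *\<^sub>R axis i 1))) has_vector_derivative
      - (ainv (B x) * partial_i i B x * ainv (B x))) (at 0)" if x: "x \<in> U" for x i
  proof -
    have "((\<lambda>t. B (x + t *\<^sub>R axis i 1)) has_vector_derivative partial_i i B x) (at 0)"
      using dB x unfolding vector_derivative_works partial_i_def by blast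
    from vector_derivative_diff_chain_within[OF this has_derivative_ainv] x assms(2)
    show ?thesis by (simp add: o_def)
  qed
  have "partially_differentiable k U (partial_i j (\<lambda>x. ainv (B x)))" for j
  proof (rule partially_differentiable_cong[OF assms(1)])
    show "partially_differentiable k U (\<lambda>x. - (ainv (B x) * partial_i j B x * ainv (B x)))"
      by (intro partially_differentiable_minus partially_differentiable_mult assms(1) IH dBj)
    show "\<forall>z\<in>U. - (ainv (B z) * partial_i j B z * ainv (B z)) = partial_i j (\<lambda>x. ainv (B x)) z"
      using partial_i_eqI[OF line] by simp
  qed
  moreover have "\<forall>i. \<forall>x\<in>U. (\<lambda>t. ainv (B (x + t *\<^sub>R axis i 1))) differentiable (at 0)"
    using line differentiableI_vector by blast
  ultimately show ?case by (simp add: partially_differentiable_Suc)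
qed

section \<open>Multi-indices as lists of directions\<close>

definition mi_list :: "('n::finite \<Rightarrow> nat) \<Rightarrow> 'n list" where
  "mi_list \<beta> = concat (map (\<lambda>i. replicate (\<beta> i) i) coord_list)"

lemma mpartial_eq_dlist: "mpartial \<beta> f = dlist (mi_list \<beta>) f"
  by (simp add: mpartial_def mi_list_def)

lemma distinct_coord_list: "distinct (coord_list :: 'n::finite list)"
  and set_coord_list: "set (coord_list :: 'n::finite list) = UNIV"
proof -
  have "distinct (coord_list :: 'n list) \<and> set (coord_list :: 'n list) = UNIV"
    unfolding coord_list_def
    by (rule someI_ex) (use finite_distinct_list[of "UNIV :: 'n set"] in auto)
  then show "distinct (coord_list :: 'n list)" "set (coord_list :: 'n list) = UNIV" by auto
qed

lemma length_mi_list: "length (mi_list \<beta>) = mi_order \<beta>"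
proof -
  have "length (mi_list \<beta>) = sum_list (map \<beta> coord_list)"
    unfolding mi_list_def by (simp add: length_concat comp_def)
  also have "\<dots> = mi_order \<beta>"
    by (simp add: sum_list_distinct_conv_sum_set distinct_coord_list set_coord_list mi_order_def)
  finally show ?thesis .
qed

lemma subseq_replicate:
  assumes "subseq ys (replicate k a)"
  shows "ys = replicate (length ys) a"
proof -
  have "y = a" if "y \<in> set ys" for y
    using list_emb_set[OF assms that] by auto
  then show ?thesis using replicate_length_same by metis
qed

lemma subseq_concat_replicate:
  assumes "distinct cl" "subseq ys (concat (map (\<lambda>i. replicate (\<beta> i) i) cl))"
  shows "\<exists>\<gamma>. ys = concat (map (\<lambda>i. replicate (\<gamma> i) i) cl)"
  using assms
proof (induction cl arbitrary: ys)
  case (Cons a cl)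
  then have "subseq ys (replicate (\<beta> a) a @ concat (map (\<lambda>i. replicate (\<beta> i) i) cl))" by simp
  then obtain y1 y2 where y: "ys = y1 @ y2" "subseq y1 (replicate (\<beta> a) a)"
      "subseq y2 (concat (map (\<lambda>i. replicate (\<beta> i) i) cl))"
    by (rule subseq_appendE)
  obtain \<gamma> where \<gamma>: "y2 = concat (map (\<lambda>i. replicate (\<gamma> i) i) cl)"
    using Cons y(3) by auto
  have "map (\<lambda>i. replicate ((\<gamma>(a := length y1)) i) i) cl = map (\<lambda>i. replicate (\<gamma> i) i) cl"
    using Cons.prems(1) by (intro map_cong) auto
  then have "concat (map (\<lambda>i. replicate ((\<gamma>(a := length y1)) i) i) (a # cl)) = y1 @ y2"
    using subseq_replicate[OF y(2)] \<gamma> by (simp only: list.map concat.simps fun_upd_same)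
  then have "ys = concat (map (\<lambda>i. replicate ((\<gamma>(a := length y1)) i) i) (a # cl))"
    using y(1) by simp
  then show ?case by blast
qed simp

lemma norm_dlist_le_of_mpartial:
  assumes "\<forall>l\<in>U. \<forall>\<beta>. mi_order \<beta> \<le> s \<longrightarrow> norm (mpartial \<beta> f l) \<le> c * C ^ mi_order \<beta>"
  shows "xs \<in> range mi_list \<Longrightarrow> length xs \<le> s \<Longrightarrow> y \<in> U \<Longrightarrow>
    norm (dlist xs f y) \<le> c * C ^ length xs"
  using assms by (auto simp: mpartial_eq_dlist length_mi_list)

lemma Nil_in_range_mi_list: "[] \<in> range mi_list"
  by (rule range_eqI[of _ _ "\<lambda>_. 0"]) (simp add: mi_list_def)

text \<open>Iterated partial derivatives are not known to commute here, and the hypotheses only bound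
  derivatives taken in the canonical order of \<open>mi_list\<close>. The estimates are therefore carried out
  on families of direction lists closed under subsequences, which is all the Leibniz rule needs.\<close>

definition subseq_closed :: "'a list set \<Rightarrow> bool" where
  "subseq_closed L \<longleftrightarrow> (\<forall>xs\<in>L. \<forall>ys. subseq ys xs \<longrightarrow> ys \<in> L)"

lemma subseq_closed_mi_list: "subseq_closed (range mi_list)"
  unfolding subseq_closed_def mi_list_def
  using subseq_concat_replicate[OF distinct_coord_list] by blast

lemma splits_mem_subseq_closed:
  "subseq_closed L \<Longrightarrow> xs \<in> L \<Longrightarrow> (a, b) \<in> set (splits xs) \<Longrightarrow> a \<in> L \<and> b \<in> L"
  unfolding subseq_closed_def using subseq_splits by blast

section \<open>Estimates\<close>

lemma norm_sum_list_le:
  fixes f :: "'x \<Rightarrow> 'b::real_normed_vector"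
  shows "norm (\<Sum>p\<leftarrow>ps. f p) \<le> (\<Sum>p\<leftarrow>ps. norm (f p))"
proof (induction ps)
  case (Cons p ps)
  then show ?case using norm_triangle_ineq[of "f p" "\<Sum>p\<leftarrow>ps. f p"] by simp
qed simp

lemma norm_dlist_mult_le:
  fixes f g :: "real^'n::finite \<Rightarrow> 'b::real_normed_algebra"
  assumes "open U" "partially_differentiable k U f" "partially_differentiable k U g"
    and "subseq_closed L"
    and f_le: "\<And>a y. a \<in> L \<Longrightarrow> length a \<le> k \<Longrightarrow> y \<in> U \<Longrightarrow> norm (dlist a f y) \<le> c * C ^ length a"
    and g_le: "\<And>b y. b \<in> L \<Longrightarrow> length b \<le> k \<Longrightarrow> y \<in> U \<Longrightarrow> norm (dlist b g y) \<le> d * D ^ length b"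
    and "xs \<in> L" "length xs \<le> k" "y \<in> U"
  shows "norm (dlist xs (\<lambda>x. f x * g x) y) \<le> c * d * (C + D) ^ length xs"
proof -
  have "norm (dlist xs (\<lambda>x. f x * g x) y) \<le> (\<Sum>(a, b)\<leftarrow>splits xs. norm (dlist a f y * dlist b g y))"
    unfolding dlist_mult[OF assms(1-3,8,9)]
    using norm_sum_list_le[of "\<lambda>(a, b). dlist a f y * dlist b g y"] by (simp add: split_def)
  also have "\<dots> \<le> (\<Sum>(a, b)\<leftarrow>splits xs. c * d * (C ^ length a * D ^ length b))"
  proof (rule sum_list_mono, clarify)
    fix a b assume ab: "(a, b) \<in> set (splits xs)"
    then have ab: "a \<in> L" "b \<in> L" "length a \<le> k" "length b \<le> k"
      using splits_mem_subseq_closed[OF assms(4,7)] length_splits[of a b xs] assms(8) by auto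
    have "norm (dlist a f y * dlist b g y) \<le> norm (dlist a f y) * norm (dlist b g y)"
      by (rule norm_mult_ineq)
    also have "\<dots> \<le> (c * C ^ length a) * (d * D ^ length b)"
      using f_le[OF ab(1,3) assms(9)] g_le[OF ab(2,4) assms(9)]
      by (intro mult_mono) (auto intro: order_trans[OF norm_ge_zero])
    also have "\<dots> = c * d * (C ^ length a * D ^ length b)" by (simp add: ac_simps)
    finally show "norm (dlist a f y * dlist b g y) \<le> c * d * (C ^ length a * D ^ length b)" .
  qed
  also have "\<dots> = c * d * (\<Sum>(a, b)\<leftarrow>splits xs. C ^ length a * D ^ length b)"
    using sum_list_const_mult[of "c * d" "\<lambda>(a, b). C ^ length a * D ^ length b" "splits xs"]
    by (simp add: split_def)
  also have "\<dots> = c * d * (C + D) ^ length xs" by (simp only: sum_list_splits_power)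
  finally show ?thesis .
qed

text \<open>In the application \<open>F = ainv (A + X)\<close>, \<open>G = ainv A\<close> and \<open>H = ainv A * X\<close>.\<close>

context
  fixes U :: "(real^'n::finite) set" and s :: nat and L :: "'n list set"
    and F G H :: "real^'n \<Rightarrow> 'a::real_normed_algebra" and M K :: real
  assumes U: "open U"
    and F: "partially_differentiable s U F" and H: "partially_differentiable s U H"
    and fixed_point: "\<forall>z\<in>U. F z + H z * F z = G z"
    and L: "subseq_closed L"
    and G_le: "\<And>xs y. xs \<in> L \<Longrightarrow> length xs \<le> s \<Longrightarrow> y \<in> U \<Longrightarrow>
      norm (dlist xs G y) \<le> M * K ^ length xs"
    and H_le: "\<And>xs y. xs \<in> L \<Longrightarrow> length xs \<le> s \<Longrightarrow> y \<in> U \<Longrightarrow>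
      norm (dlist xs H y) \<le> K ^ length xs / 2"
    and M: "0 \<le> M" and K: "0 \<le> K"
begin

lemma dlist_fixed_point_eq:
  assumes "length xs \<le> s" "y \<in> U"
  shows "dlist xs F y = dlist xs G y - H y * dlist xs F y
      - (\<Sum>(a, b)\<leftarrow>tl (splits xs). dlist a H y * dlist b F y)"
proof -
  have "dlist xs G y = dlist xs (\<lambda>x. F x + H x * F x) y"
    using dlist_cong[OF U fixed_point] assms(2) by simp
  also have "\<dots> = dlist xs F y + dlist xs (\<lambda>x. H x * F x) y"
    using dlist_add[OF U F partially_differentiable_mult[OF U H F] assms] .
  also have "dlist xs (\<lambda>x. H x * F x) y
      = H y * dlist xs F y + (\<Sum>(a, b)\<leftarrow>tl (splits xs). dlist a H y * dlist b F y)"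
    using dlist_mult[OF U H F assms] by (subst (asm) splits_eq_Cons) simp
  finally show ?thesis by (simp add: algebra_simps)
qed

lemma norm_tl_splits_term_le:
  assumes xs: "xs \<in> L" "length xs \<le> s" "y \<in> U" and ab_tl: "(a, b) \<in> set (tl (splits xs))"
    and IH: "\<And>b. b \<in> L \<Longrightarrow> length b < length xs \<Longrightarrow>
      norm (dlist b F y) \<le> 2 * (real (length b) + 1) ^ length b * M * K ^ length b"
  defines "n \<equiv> length xs"
  shows "norm (dlist a H y * dlist b F y) \<le> M * K ^ n * real n ^ length b"
proof -
  have ab_splits: "(a, b) \<in> set (splits xs)" by (rule list.set_sel(2)[OF splits_not_Nil ab_tl])
  have len: "length a + length b = n" using length_splits[OF ab_splits] by (simp add: n_def)
  have "length b < n" using tl_splits_nonempty[OF ab_tl] len by (cases a) auto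
  have ab: "a \<in> L" "b \<in> L" using splits_mem_subseq_closed[OF L xs(1) ab_splits] by auto
  have "norm (dlist a H y * dlist b F y) \<le> norm (dlist a H y) * norm (dlist b F y)"
    by (rule norm_mult_ineq)
  also have "\<dots> \<le> (K ^ length a / 2) * (2 * real n ^ length b * M * K ^ length b)"
  proof (intro mult_mono)
    show "norm (dlist a H y) \<le> K ^ length a / 2" using H_le ab(1) len xs by (simp add: n_def)
    have "(real (length b) + 1) ^ length b \<le> real n ^ length b"
      using \<open>length b < n\<close> by (intro power_mono) auto
    then have "2 * (real (length b) + 1) ^ length b * M * K ^ length b
        \<le> 2 * real n ^ length b * M * K ^ length b"
      using M K by (intro mult_right_mono) auto
    then show "norm (dlist b F y) \<le> 2 * real n ^ length b * M * K ^ length b"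
      using IH[OF ab(2)] \<open>length b < n\<close> unfolding n_def by linarith
  qed (use K in auto)
  also have "\<dots> = M * (K ^ length a * K ^ length b) * real n ^ length b" by simp
  also have "\<dots> = M * K ^ n * real n ^ length b" by (simp add: power_add[symmetric] len)
  finally show ?thesis .
qed

lemma norm_tl_splits_sum_le:
  assumes xs: "xs \<in> L" "length xs \<le> s" "y \<in> U"
    and IH: "\<And>b. b \<in> L \<Longrightarrow> length b < length xs \<Longrightarrow>
      norm (dlist b F y) \<le> 2 * (real (length b) + 1) ^ length b * M * K ^ length b"
  defines "n \<equiv> length xs"
  shows "norm (\<Sum>(a, b)\<leftarrow>tl (splits xs). dlist a H y * dlist b F y)
      \<le> M * K ^ n * ((real n + 1) ^ n - real n ^ n)"
proof -
  have "norm (\<Sum>(a, b)\<leftarrow>tl (splits xs). dlist a H y * dlist b F y)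
      \<le> (\<Sum>(a, b)\<leftarrow>tl (splits xs). norm (dlist a H y * dlist b F y))"
    using norm_sum_list_le[of "\<lambda>(a, b). dlist a H y * dlist b F y"] by (simp add: split_def)
  also have "\<dots> \<le> (\<Sum>(a, b)\<leftarrow>tl (splits xs). M * K ^ n * real n ^ length b)"
    using norm_tl_splits_term_le[OF xs _ IH] unfolding n_def by (intro sum_list_mono) auto
  also have "\<dots> = M * K ^ n * ((real n + 1) ^ n - real n ^ n)"
    using sum_list_const_mult[of "M * K ^ n" "\<lambda>(a, b). real n ^ length b" "tl (splits xs)"]
      sum_list_tl_splits_power[of "real n" xs]
    by (simp add: split_def n_def)
  finally show ?thesis .
qed

lemma norm_dlist_fixed_point_le:
  "xs \<in> L \<Longrightarrow> length xs \<le> s \<Longrightarrow> y \<in> U \<Longrightarrow>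
    norm (dlist xs F y) \<le> 2 * (real (length xs) + 1) ^ length xs * M * K ^ length xs"
proof (induction "length xs" arbitrary: xs rule: less_induct)
  case less
  define n N T where "n = length xs" and "N = norm (dlist xs F y)"
    and "T = (\<Sum>(a, b)\<leftarrow>tl (splits xs). dlist a H y * dlist b F y)"
  have "N = norm (dlist xs G y - H y * dlist xs F y - T)"
    unfolding N_def T_def by (subst dlist_fixed_point_eq[OF less.prems(2,3)]) (rule refl)
  also have "\<dots> \<le> norm (dlist xs G y) + norm (H y * dlist xs F y) + norm T"
    using norm_triangle_ineq4[of "dlist xs G y - H y * dlist xs F y" T]
      norm_triangle_ineq4[of "dlist xs G y" "H y * dlist xs F y"] by linarith
  also have "norm (dlist xs G y) \<le> M * K ^ n"
    using G_le less.prems by (simp add: n_def)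
  also have "norm (H y * dlist xs F y) \<le> N / 2"
    \<comment> \<open>the unknown derivative itself, from the term \<open>([], xs)\<close> of the Leibniz sum\<close>
  proof -
    have "[] \<in> L" using L less.prems(1) unfolding subseq_closed_def by blast
    then have "norm (H y) \<le> 1 / 2" using H_le less.prems(3) by fastforce
    then show ?thesis
      using norm_mult_ineq[of "H y" "dlist xs F y"] mult_right_mono[of "norm (H y)" "1/2" N]
      unfolding N_def by simp
  qed
  also have "norm T \<le> M * K ^ n * ((real n + 1) ^ n - real n ^ n)"
    unfolding n_def T_def using less by (intro norm_tl_splits_sum_le) auto
  finally have "N \<le> 2 * (M * K ^ n) + 2 * (M * K ^ n * (real n + 1) ^ n)
      - 2 * (M * K ^ n * real n ^ n)"
    by (simp add: right_diff_distrib)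
  moreover have "M * K ^ n \<le> M * K ^ n * real n ^ n"
  proof -
    have "1 \<le> real n ^ n"
    proof (cases "n = 0")
      case False
      then have "1 \<le> real n" by simp
      then show ?thesis by (rule one_le_power)
    qed simp
    then show ?thesis using mult_left_mono[of 1 "real n ^ n" "M * K ^ n"] M K by simp
  qed
  ultimately show ?case unfolding n_def N_def by (simp add: algebra_simps)
qed

end

lemma norm_le_sum_norm_one_powers:
  fixes x :: "'a::{real_normed_algebra, real_algebra_1}"
  assumes "norm x \<le> 2 * (real n + 1) ^ n * M * K ^ n" "0 \<le> M" "0 \<le> K"
  shows "norm x \<le> 2 * (\<Sum>k=1..n + 1. real k ^ n * norm (1::'a) ^ k) * M * K ^ n"
proof (cases "(1::'a) = 0")
  case True
  then have "x = 0" by (metis mult_1_right mult_zero_right)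
  then show ?thesis using assms(2,3) by (simp add: sum_nonneg)
next
  case False
  have "norm (1::'a) \<le> norm (1::'a) * norm (1::'a)" using norm_mult_ineq[of "1::'a" 1] by simp
  then have "1 \<le> norm (1::'a)" using False by simp
  then have "(real n + 1) ^ n \<le> real (n + 1) ^ n * norm (1::'a) ^ (n + 1)"
    using one_le_power[of "norm (1::'a)" "n + 1"] by (simp add: add.commute)
  also have "\<dots> \<le> (\<Sum>k=1..n + 1. real k ^ n * norm (1::'a) ^ k)"
    by (rule member_le_sum[of "n + 1" "{1..n + 1}" "\<lambda>k. real k ^ n * norm (1::'a) ^ k"]) auto
  finally have "2 * (real n + 1) ^ n * M * K ^ n
      \<le> 2 * (\<Sum>k=1..n + 1. real k ^ n * norm (1::'a) ^ k) * M * K ^ n"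
    using assms(2,3) by (intro mult_right_mono) auto
  then show ?thesis using assms(1) by linarith
qed

lemma norm_dlist_ainv_add_le:
  fixes A X :: "real^'n::finite \<Rightarrow> 'a::{real_normed_algebra, real_algebra_1, banach}"
  assumes U: "open U"
    and A: "partially_differentiable s U A" and X: "partially_differentiable s U X"
    and inv: "\<forall>y\<in>U. invertible_elem (A y)" "\<forall>y\<in>U. invertible_elem (A y + X y)"
    and L: "subseq_closed L"
    and G_le: "\<And>xs y. xs \<in> L \<Longrightarrow> length xs \<le> s \<Longrightarrow> y \<in> U \<Longrightarrow>
      norm (dlist xs (\<lambda>x. ainv (A x)) y) \<le> M * C ^ length xs"
    and X_le: "\<And>xs y. xs \<in> L \<Longrightarrow> length xs \<le> s \<Longrightarrow> y \<in> U \<Longrightarrow>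
      norm (dlist xs X y) \<le> \<epsilon> * C ^ length xs"
    and small: "\<epsilon> * M \<le> 1 / 2" and M: "0 \<le> M" and C: "0 \<le> C"
    and xs: "xs \<in> L" "length xs \<le> s" "y \<in> U"
  shows "norm (dlist xs (\<lambda>x. ainv (A x + X x)) y)
      \<le> 2 * (real (length xs) + 1) ^ length xs * M * (2 * C) ^ length xs"
proof -
  define G where "G = (\<lambda>x. ainv (A x))"
  have G: "partially_differentiable s U G"
    unfolding G_def by (rule partially_differentiable_ainv[OF U inv(1) A])
  have F: "partially_differentiable s U (\<lambda>x. ainv (A x + X x))"
    using inv(2) by (intro partially_differentiable_ainv partially_differentiable_add U A X)
  show ?thesis
  proof (rule norm_dlist_fixed_point_le[OF U F partially_differentiable_mult[OF U G X]
        _ L _ _ M _ xs])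
    show "\<forall>z\<in>U. ainv (A z + X z) + G z * X z * ainv (A z + X z) = G z"
      using ainv_add_eq inv unfolding G_def by blast
    show "norm (dlist xs G y) \<le> M * (2 * C) ^ length xs"
      if "xs \<in> L" "length xs \<le> s" "y \<in> U" for xs y
    proof -
      have "M * C ^ length xs \<le> M * (2 * C) ^ length xs"
        using M C by (intro mult_left_mono power_mono) auto
      then show ?thesis using G_le[OF that] unfolding G_def by linarith
    qed
    show "norm (dlist xs (\<lambda>x. G x * X x) y) \<le> (2 * C) ^ length xs / 2"
      if "xs \<in> L" "length xs \<le> s" "y \<in> U" for xs y
    proof -
      have "norm (dlist xs (\<lambda>x. G x * X x) y) \<le> M * \<epsilon> * (2 * C) ^ length xs"
        using norm_dlist_mult_le[OF U G X L G_le[folded G_def] X_le that] by (simp only: mult_2)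
      moreover have "M * \<epsilon> * (2 * C) ^ length xs \<le> 1 / 2 * (2 * C) ^ length xs"
        using small C by (intro mult_right_mono) (auto simp: mult.commute)
      ultimately show ?thesis by linarith
    qed
  qed (use C in simp)
qed

theorem proposition24:
  fixes A X :: "real^'n::finite \<Rightarrow> 'a::{real_normed_algebra, real_algebra_1, banach}"
    and U :: "(real^'n) set"
    and s :: nat and \<epsilon> M C :: real
  assumes "open U"
    and "Cs_on s U A" and "Cs_on s U X"
    and "\<forall>l\<in>U. invertible_elem (A l)"
    and "\<epsilon> > 0" and "M \<ge> 1" and "C \<ge> 1"
    and "\<forall>l\<in>U. \<forall>\<beta>. mi_order \<beta> \<le> s \<longrightarrow>
           norm (mpartial \<beta> (\<lambda>x. ainv (A x)) l) \<le> M * C ^ mi_order \<beta>"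
    and "\<forall>l\<in>U. \<forall>\<beta>. mi_order \<beta> \<le> s \<longrightarrow>
           norm (mpartial \<beta> X l) \<le> \<epsilon> * C ^ mi_order \<beta>"
    and "\<epsilon> * M \<le> 1 / 2"
  shows "\<forall>l\<in>U. invertible_elem (A l + X l) \<and>
           (\<forall>\<beta>. mi_order \<beta> \<le> s \<longrightarrow>
              norm (mpartial \<beta> (\<lambda>x. ainv (A x + X x)) l)
                \<le> 2 * (\<Sum>k=1..mi_order \<beta> + 1. real k ^ mi_order \<beta> * norm (1::'a) ^ k)
                    * M * (2 * C) ^ mi_order \<beta>)"
proof -
  have A: "partially_differentiable s U A" and X: "partially_differentiable s U X"
    using assms(2,3) by (simp_all add: Cs_on_imp_partially_differentiable)
  note G_le = norm_dlist_le_of_mpartial[OF assms(8)]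
    and X_le = norm_dlist_le_of_mpartial[OF assms(9)]
  have inv: "\<forall>y\<in>U. invertible_elem (A y + X y)"
  proof
    fix y assume y: "y \<in> U"
    have "norm (ainv (A y)) * norm (X y) \<le> M * \<epsilon>"
      using G_le[OF Nil_in_range_mi_list _ y] X_le[OF Nil_in_range_mi_list _ y] assms(5,6)
      by (intro mult_mono) auto
    then show "invertible_elem (A y + X y)"
      using assms(4,10) y by (intro invertible_elem_add) (auto simp: mult.commute)
  qed
  show ?thesis
  proof (intro ballI conjI allI impI)
    fix l assume l: "l \<in> U"
    show "invertible_elem (A l + X l)" using inv l by blast
    fix \<beta> :: "'n \<Rightarrow> nat" assume \<beta>: "mi_order \<beta> \<le> s"
    show "norm (mpartial \<beta> (\<lambda>x. ainv (A x + X x)) l)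
        \<le> 2 * (\<Sum>k=1..mi_order \<beta> + 1. real k ^ mi_order \<beta> * norm (1::'a) ^ k)
          * M * (2 * C) ^ mi_order \<beta>"
      unfolding mpartial_eq_dlist
      using norm_dlist_ainv_add_le[OF assms(1) A X assms(4) inv subseq_closed_mi_list G_le X_le
          assms(10) _ _ rangeI _ l] \<beta> assms(6,7)
      by (intro norm_le_sum_norm_one_powers) (simp_all add: length_mi_list)
  qed
qed

end
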